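(* For every $n\ge2$, the number of acyclic, locally uniform, strongly Holt--Klee unique-sink orientations of the $n$-cube is at least $2^{\binom{n-1}{\lfloor (n-1)/2\rfloor}}$, which is $2^{\Omega(2^n/\sqrt n)}$.
   Context: For $v\in\{0,1\}^n$ and $I\subseteq[n]$, $v\oplus I$ is obtained from $v$ by flipping the coordinates in $I$; $v\oplus i:=v\oplus\{i\}$. The $n$-cube has vertex set $\{0,1\}^n$ and edges $\{v,v\oplus i\}$. A subcube is the induced subgraph on a vertex set $\{v\oplus I: I\subseteq C\}$ for some vertex $v$ and $C\subseteq[n]$; its dimension is $|C|$. A unique-sink orientation (USO) is an orientation of the $n$-cube in which every subcube has exactly one sink; then every subcube also has a unique source. For an orientation $\Phi$ and $F\subseteq[n]$, $\Phi^{(F)}$ is obtained by reversing all edges $\{v,v\oplus i\}$ with $i\in F$. A USO is Holt--Klee if in every subcube of dimension $d$ there are $d$ directed paths from the subcube's source to its sink, pairwise sharing no vertex other than source and sink. A USO $\Phi$ is strongly Holt--Klee if $\Phi^{(F)}$ is Holt--Klee for every $F\subseteq[n]$. A USO is locally uniform if (i) whenever $u_i=u_j=0$, $u\to u\oplus i$ and $u\to u\oplus j$, then $u\oplus i\to u\oplus\{i,j\}$ and $u\oplus j\to u\oplus\{i,j\}$; and (ii) whenever $u_i=u_j=0$, $u\oplus i\to u$ and $u\oplus j\to u$, then $u\oplus\{i,j\}\to u\oplus i$ and $u\oplus\{i,j\}\to u\oplus j$. Acyclic means no directed cycle. *)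

theory Defs
  imports Main
begin

text \<open>Vertices of the n-cube are subsets of {..<n} (a vertex v in {0,1}^n is
identified with the set of coordinates i with v_i = 1).  Flipping a set I of
coordinates is symmetric difference.\<close>

definition flip :: "nat set \<Rightarrow> nat set \<Rightarrow> nat set" where
  "flip v I = (v - I) \<union> (I - v)"

definition cube_vertex :: "nat \<Rightarrow> nat set \<Rightarrow> bool" where
  "cube_vertex n v \<longleftrightarrow> v \<subseteq> {..<n}"

definition cube_edge :: "nat \<Rightarrow> nat set \<Rightarrow> nat set \<Rightarrow> bool" where
  "cube_edge n u v \<longleftrightarrow> cube_vertex n u \<and> (\<exists>i<n. v = flip u {i})"

text \<open>An orientation of the n-cube is a set D of directed edges (u,v), meaning u \<rightarrow> v,
containing exactly one direction of each cube edge.\<close>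

definition orientation :: "nat \<Rightarrow> (nat set \<times> nat set) set \<Rightarrow> bool" where
  "orientation n D \<longleftrightarrow>
     D \<subseteq> {(u, v). cube_edge n u v} \<and>
     (\<forall>u v. cube_edge n u v \<longrightarrow> ((u, v) \<in> D \<longleftrightarrow> (v, u) \<notin> D))"

definition subcube :: "nat set \<Rightarrow> nat set \<Rightarrow> nat set set" where
  "subcube v C = {flip v I | I. I \<subseteq> C}"

definition is_sink :: "(nat set \<times> nat set) set \<Rightarrow> nat set set \<Rightarrow> nat set \<Rightarrow> bool" where
  "is_sink D S w \<longleftrightarrow> w \<in> S \<and> (\<forall>u\<in>S. (w, u) \<notin> D)"

definition is_source :: "(nat set \<times> nat set) set \<Rightarrow> nat set set \<Rightarrow> nat set \<Rightarrow> bool" where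
  "is_source D S w \<longleftrightarrow> w \<in> S \<and> (\<forall>u\<in>S. (u, w) \<notin> D)"

definition USO :: "nat \<Rightarrow> (nat set \<times> nat set) set \<Rightarrow> bool" where
  "USO n D \<longleftrightarrow> orientation n D \<and>
     (\<forall>v C. cube_vertex n v \<longrightarrow> C \<subseteq> {..<n} \<longrightarrow> (\<exists>!w. is_sink D (subcube v C) w))"

definition reorient :: "(nat set \<times> nat set) set \<Rightarrow> nat set \<Rightarrow> (nat set \<times> nat set) set" where
  "reorient D F =
     {(u, v). (u, v) \<in> D \<and> flip u v \<inter> F = {}} \<union>
     {(v, u). (u, v) \<in> D \<and> flip u v \<inter> F \<noteq> {}}"

definition dpath :: "(nat set \<times> nat set) set \<Rightarrow> nat set set \<Rightarrow> nat set \<Rightarrow> nat set \<Rightarrow> nat set list \<Rightarrow> bool" where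
  "dpath D S s t p \<longleftrightarrow> p \<noteq> [] \<and> hd p = s \<and> last p = t \<and> distinct p \<and> set p \<subseteq> S \<and>
     (\<forall>k. Suc k < length p \<longrightarrow> (p ! k, p ! Suc k) \<in> D)"

definition holt_klee :: "nat \<Rightarrow> (nat set \<times> nat set) set \<Rightarrow> bool" where
  "holt_klee n D \<longleftrightarrow> USO n D \<and>
     (\<forall>v C s t. cube_vertex n v \<longrightarrow> C \<subseteq> {..<n} \<longrightarrow>
        is_source D (subcube v C) s \<longrightarrow> is_sink D (subcube v C) t \<longrightarrow>
        (\<exists>P :: nat \<Rightarrow> nat set list.
            (\<forall>i<card C. dpath D (subcube v C) s t (P i)) \<and>
            inj_on P {..<card C} \<and>
            (\<forall>i<card C. \<forall>j<card C. i \<noteq> j \<longrightarrow> set (P i) \<inter> set (P j) \<subseteq> {s, t})))"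

definition strongly_holt_klee :: "nat \<Rightarrow> (nat set \<times> nat set) set \<Rightarrow> bool" where
  "strongly_holt_klee n D \<longleftrightarrow> (\<forall>F. F \<subseteq> {..<n} \<longrightarrow> holt_klee n (reorient D F))"

definition locally_uniform :: "nat \<Rightarrow> (nat set \<times> nat set) set \<Rightarrow> bool" where
  "locally_uniform n D \<longleftrightarrow>
     (\<forall>u i j. cube_vertex n u \<longrightarrow> i < n \<longrightarrow> j < n \<longrightarrow> i \<noteq> j \<longrightarrow> i \<notin> u \<longrightarrow> j \<notin> u \<longrightarrow>
        ((u, flip u {i}) \<in> D \<and> (u, flip u {j}) \<in> D \<longrightarrow>
           (flip u {i}, flip u {i, j}) \<in> D \<and> (flip u {j}, flip u {i, j}) \<in> D) \<and>
        ((flip u {i}, u) \<in> D \<and> (flip u {j}, u) \<in> D \<longrightarrow>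
           (flip u {i, j}, flip u {i}) \<in> D \<and> (flip u {i, j}, flip u {j}) \<in> D))"

end

theory Submission
  imports Defs
begin

(* For every up-set U of the N-cube (a family of subsets of {..<N} closed under taking
   supersets) orient the n-cube as follows: every edge in a direction i < N points
   upwards, and the edge in direction N at a vertex u of the bottom facet points up iff
   u is in U.  Each such orientation is an acyclic, locally uniform USO, and U can be
   read off from it.  Reversing any set F of directions yields an orientation of the
   same shape, so being strongly Holt--Klee reduces to the Holt--Klee property for this
   whole family.  In a subcube, source and sink are antipodal in all directions below
   N, and the required disjoint paths walk along the rotations of an enumeration of the
   directions; if the subcube contains direction N, one extra path detours through the
   parallel facet, or every path crosses once, at a point chosen with the help of the
   up-set property.  Finally, the up-sets containing all sets above the middle layer of
   the N-cube already number 2 ^ (N choose N div 2). *)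

lemma mem_flip: "x \<in> flip u I \<longleftrightarrow> (x \<in> u) \<noteq> (x \<in> I)"
  unfolding flip_def by auto

lemma flip_eq_iff: "flip x X = flip x Y \<longleftrightarrow> X = Y"
  by (auto simp: set_eq_iff mem_flip)

lemma flip_empty [simp]: "flip x {} = x"
  by (simp add: flip_def)

lemma flip_flip [simp]: "flip (flip u X) X = u"
  by (auto simp: flip_def)

lemma flip_diff_flip: "flip u (flip u X) = X"
  by (auto simp: flip_def)

lemma flip_commute: "flip u v = flip v u"
  by (auto simp: flip_def)

lemma cube_vertex_flip: "cube_vertex n u \<Longrightarrow> X \<subseteq> {..<n} \<Longrightarrow> cube_vertex n (flip u X)"
  by (auto simp: cube_vertex_def flip_def)

lemma subcube_iff: "w \<in> subcube v C \<longleftrightarrow> (\<forall>x. x \<notin> C \<longrightarrow> (x \<in> w \<longleftrightarrow> x \<in> v))"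
proof
  assume "w \<in> subcube v C"
  then obtain I where "I \<subseteq> C" "w = flip v I" by (auto simp: subcube_def)
  then show "\<forall>x. x \<notin> C \<longrightarrow> (x \<in> w \<longleftrightarrow> x \<in> v)" by (auto simp: mem_flip)
next
  assume h: "\<forall>x. x \<notin> C \<longrightarrow> (x \<in> w \<longleftrightarrow> x \<in> v)"
  have "flip v w \<subseteq> C" using h by (auto simp: mem_flip)
  moreover have "w = flip v (flip v w)" by (simp add: flip_diff_flip)
  ultimately show "w \<in> subcube v C" unfolding subcube_def by blast
qed

lemma subcube_vertex: "cube_vertex n v \<Longrightarrow> C \<subseteq> {..<n} \<Longrightarrow> w \<in> subcube v C \<Longrightarrow> cube_vertex n w"
  unfolding cube_vertex_def subcube_iff by blast

lemma flip_in_subcube: "w \<in> subcube v C \<Longrightarrow> X \<subseteq> C \<Longrightarrow> flip w X \<in> subcube v C"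
  unfolding subcube_iff by (auto simp: mem_flip)

lemma neighbour_in_subcube_dir: "w \<in> subcube v C \<Longrightarrow> flip w {i} \<in> subcube v C \<Longrightarrow> i \<in> C"
  unfolding subcube_iff by (auto simp: mem_flip)

lemma finite_orientations: "finite {D. orientation n D}"
proof (rule finite_subset)
  have "cube_edge n u v \<Longrightarrow> u \<subseteq> {..<n} \<and> v \<subseteq> {..<n}" for u v
    by (auto simp: cube_edge_def cube_vertex_def flip_def)
  then show "{D. orientation n D} \<subseteq> Pow (Pow {..<n} \<times> Pow {..<n})"
    by (fastforce simp: orientation_def)
qed simp

section \<open>Orientations given by an outward predicate\<close>

text \<open>Every orientation of the cube is described by a predicate \<open>out u i\<close> saying that
  the edge at \<open>u\<close> in direction \<open>i\<close> leaves \<open>u\<close>.\<close>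

definition out_orient :: "nat \<Rightarrow> (nat set \<Rightarrow> nat \<Rightarrow> bool) \<Rightarrow> (nat set \<times> nat set) set" where
  "out_orient n out = {(u, flip u {i}) | u i. cube_vertex n u \<and> i < n \<and> out u i}"

definition consistent_out :: "nat \<Rightarrow> (nat set \<Rightarrow> nat \<Rightarrow> bool) \<Rightarrow> bool" where
  "consistent_out n out \<longleftrightarrow> (\<forall>u i. i < n \<longrightarrow> out (flip u {i}) i = (\<not> out u i))"

lemma out_orient_iff:
  "(u, w) \<in> out_orient n out \<longleftrightarrow> cube_vertex n u \<and> (\<exists>i<n. w = flip u {i} \<and> out u i)"
  by (auto simp: out_orient_def)

lemma out_orient_edge:
  "(u, flip u {i}) \<in> out_orient n out \<longleftrightarrow> cube_vertex n u \<and> i < n \<and> out u i"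
  unfolding out_orient_iff by (metis flip_eq_iff singleton_inject)

lemma out_orient_edge_back:
  assumes "consistent_out n out" "cube_vertex n u" "i < n"
  shows "(flip u {i}, u) \<in> out_orient n out \<longleftrightarrow> \<not> out u i"
  using out_orient_edge[of "flip u {i}" i n out] assms cube_vertex_flip[of n u "{i}"]
  by (simp add: consistent_out_def)

lemma orientation_out_orient:
  assumes "consistent_out n out"
  shows "orientation n (out_orient n out)"
  unfolding orientation_def
proof (intro conjI allI impI)
  show "out_orient n out \<subseteq> {(u, v). cube_edge n u v}"
    by (auto simp: out_orient_iff cube_edge_def)
next
  fix u w assume "cube_edge n u w"
  then obtain i where "cube_vertex n u" "i < n" "w = flip u {i}" by (auto simp: cube_edge_def)
  then show "(u, w) \<in> out_orient n out \<longleftrightarrow> (w, u) \<notin> out_orient n out"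
    using out_orient_edge out_orient_edge_back[OF assms] by blast
qed

lemma out_orient_in_subcube:
  assumes v: "cube_vertex n v" and C: "C \<subseteq> {..<n}"
    and w: "w \<in> subcube v C" and u: "u \<in> subcube v C"
  shows "(w, u) \<in> out_orient n out \<longleftrightarrow> (\<exists>i\<in>C. u = flip w {i} \<and> out w i)"
  using subcube_vertex[OF v C w] C neighbour_in_subcube_dir[OF w] u
  by (auto simp: out_orient_iff)

lemma no_arc_out_of_iff:
  assumes v: "cube_vertex n v" and C: "C \<subseteq> {..<n}" and w: "w \<in> subcube v C"
  shows "(\<forall>u\<in>subcube v C. (w, u) \<notin> out_orient n out) \<longleftrightarrow> (\<forall>i\<in>C. \<not> out w i)"
proof
  assume none: "\<forall>u\<in>subcube v C. (w, u) \<notin> out_orient n out"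
  show "\<forall>i\<in>C. \<not> out w i"
  proof
    fix i assume i: "i \<in> C"
    then have "flip w {i} \<in> subcube v C" using flip_in_subcube[OF w] by simp
    then show "\<not> out w i" using none out_orient_in_subcube[OF v C w] i by blast
  qed
next
  assume "\<forall>i\<in>C. \<not> out w i"
  then show "\<forall>u\<in>subcube v C. (w, u) \<notin> out_orient n out"
    using out_orient_in_subcube[OF v C w] by blast
qed

lemma sink_out_orient:
  assumes v: "cube_vertex n v" and C: "C \<subseteq> {..<n}"
  shows "is_sink (out_orient n out) (subcube v C) w \<longleftrightarrow> w \<in> subcube v C \<and> (\<forall>i\<in>C. \<not> out w i)"
  unfolding is_sink_def using no_arc_out_of_iff[OF v C, of w out] by auto

text \<open>Reversing all arcs of an outward-predicate orientation amounts to negating the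
  predicate; so sources are characterised dually.\<close>

lemma converse_out_orient:
  assumes "consistent_out n out"
  shows "(out_orient n out)\<inverse> = out_orient n (\<lambda>u i. \<not> out u i)"
proof (rule set_eqI, clarify)
  fix a b
  show "(a, b) \<in> (out_orient n out)\<inverse> \<longleftrightarrow> (a, b) \<in> out_orient n (\<lambda>u i. \<not> out u i)"
  proof
    assume "(a, b) \<in> (out_orient n out)\<inverse>"
    then obtain i where i: "cube_vertex n b" "i < n" "a = flip b {i}" "out b i"
      by (auto simp: out_orient_iff)
    have a: "cube_vertex n a" "\<not> out a i"
      using assms i cube_vertex_flip[of n b "{i}"] by (simp_all add: consistent_out_def)
    have "b = flip a {i}" using i(3) by simp
    then show "(a, b) \<in> out_orient n (\<lambda>u i. \<not> out u i)"
      using a i(2) by (simp add: out_orient_edge)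
  next
    assume "(a, b) \<in> out_orient n (\<lambda>u i. \<not> out u i)"
    then obtain i where i: "cube_vertex n a" "i < n" "b = flip a {i}" "\<not> out a i"
      by (auto simp: out_orient_iff)
    then have "(flip a {i}, a) \<in> out_orient n out"
      using out_orient_edge_back[OF assms] by blast
    then show "(a, b) \<in> (out_orient n out)\<inverse>" using i(3) by simp
  qed
qed

lemma source_out_orient:
  assumes cons: "consistent_out n out" and v: "cube_vertex n v" and C: "C \<subseteq> {..<n}"
  shows "is_source (out_orient n out) (subcube v C) w \<longleftrightarrow> w \<in> subcube v C \<and> (\<forall>i\<in>C. out w i)"
proof -
  have "is_source (out_orient n out) (subcube v C) w
      \<longleftrightarrow> is_sink (out_orient n (\<lambda>u i. \<not> out u i)) (subcube v C) w"
    using converse_out_orient[OF cons] by (auto simp: is_source_def is_sink_def)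
  then show ?thesis using sink_out_orient[OF v C] by simp
qed

lemma USO_out_orient:
  assumes "consistent_out n out"
    and "\<And>v C. cube_vertex n v \<Longrightarrow> C \<subseteq> {..<n} \<Longrightarrow> \<exists>!w. w \<in> subcube v C \<and> (\<forall>i\<in>C. \<not> out w i)"
  shows "USO n (out_orient n out)"
  using assms by (simp add: USO_def orientation_out_orient sink_out_orient)

lemma reorient_out_orient:
  assumes cons: "consistent_out n out"
  shows "reorient (out_orient n out) F = out_orient n (\<lambda>u i. out u i \<noteq> (i \<in> F))"
    (is "reorient ?D F = ?D'")
proof (rule set_eqI, clarify)
  fix a b
  have reorient_iff: "(a, b) \<in> reorient ?D F \<longleftrightarrow>
      ((a, b) \<in> ?D \<and> flip a b \<inter> F = {}) \<or> ((b, a) \<in> ?D \<and> flip b a \<inter> F \<noteq> {})"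
    by (auto simp: reorient_def)
  consider (edge) i where "i < n" "cube_vertex n a" "b = flip a {i}"
    | (no_edge) "\<forall>i<n. \<not> (cube_vertex n a \<and> b = flip a {i})"
    by blast
  then show "(a, b) \<in> reorient ?D F \<longleftrightarrow> (a, b) \<in> ?D'"
  proof cases
    case edge
    then have "flip a b = {i}" "flip b a = {i}" by (simp_all add: flip_diff_flip flip_commute)
    then show ?thesis
      using edge out_orient_edge[of a i n] out_orient_edge_back[OF cons edge(2,1)] reorient_iff
      by auto
  next
    case no_edge
    then have "(b, a) \<notin> ?D"
      by (auto simp: out_orient_iff intro: cube_vertex_flip)
    then show ?thesis using no_edge reorient_iff by (auto simp: out_orient_iff)
  qed
qed

section \<open>Walks through rotations of a list of directions\<close>

text \<open>Flipping these prefixes one after the other walks from a vertex to its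
  antipode in the subcube spanned by \<open>c\<close>; for distinct entries, the walks of different
  rotations meet only at their two ends.\<close>

definition rot_prefix :: "nat list \<Rightarrow> nat \<Rightarrow> nat \<Rightarrow> nat set" where
  "rot_prefix c r k = set (take k (rotate r c))"

lemma rot_prefix_0 [simp]: "rot_prefix c r 0 = {}"
  by (simp add: rot_prefix_def)

lemma rot_prefix_Suc:
  "k < length c \<Longrightarrow> rot_prefix c r (Suc k) = insert (rotate r c ! k) (rot_prefix c r k)"
  by (simp add: rot_prefix_def take_Suc_conv_app_nth)

lemma rot_prefix_subset: "rot_prefix c r k \<subseteq> set c"
  by (auto simp: rot_prefix_def dest: in_set_takeD)

lemma rot_prefix_full [simp]: "rot_prefix c r (length c) = set c"
  by (simp add: rot_prefix_def)

lemma rot_prefix_fresh: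
  assumes "distinct c" "k < length c"
  shows "rotate r c ! k \<notin> rot_prefix c r k"
proof -
  have "distinct (take (Suc k) (rotate r c))" using assms(1) by simp
  then show ?thesis using assms(2) by (simp add: rot_prefix_def take_Suc_conv_app_nth)
qed

lemma rot_prefix_mem: "t < k \<Longrightarrow> k \<le> length c \<Longrightarrow> rotate r c ! t \<in> rot_prefix c r k"
  by (auto simp: rot_prefix_def in_set_conv_nth intro!: exI[of _ t])

lemma card_rot_prefix: "distinct c \<Longrightarrow> k \<le> length c \<Longrightarrow> card (rot_prefix c r k) = k"
  by (simp add: rot_prefix_def distinct_card)

lemma rotate_nth_0:
  assumes "r < length c"
  shows "rotate r c ! 0 = c ! r"
proof -
  have "0 < length c" using assms by linarith
  then show ?thesis using nth_rotate[of 0 c r] assms by simp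
qed

lemma rot_prefix_one:
  assumes "r < length c"
  shows "rot_prefix c r 1 = {c ! r}"
proof -
  have "take 1 (rotate r c) = [rotate r c ! 0]"
    using assms by (cases "rotate r c") auto
  then show ?thesis using rotate_nth_0[OF assms] by (simp add: rot_prefix_def)
qed

lemma rot_prefix_all_but_one:
  assumes d: "distinct c" and r: "0 < r" "r < length c"
  shows "rot_prefix c r (length c - 1) = set c - {c ! (r - 1)}"
proof -
  let ?m = "length c"
  have "(r + (?m - 1)) mod ?m = r - 1"
  proof -
    have split: "r + (?m - 1) = (r - 1) + ?m" using r by arith
    have "((r - 1) + ?m) mod ?m = r - 1" using r by (simp only: mod_add_self2) simp
    then show ?thesis using split by metis
  qed
  then have last_entry: "rotate r c ! (?m - 1) = c ! (r - 1)"
    using r nth_rotate[of "?m - 1" c r] by simp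
  have "Suc (?m - 1) = ?m" "?m - 1 < ?m" using r by auto
  then have "set c = insert (c ! (r - 1)) (rot_prefix c r (?m - 1))"
    using rot_prefix_Suc[of "?m - 1" c r] last_entry by simp
  moreover have "c ! (r - 1) \<notin> rot_prefix c r (?m - 1)"
    using rot_prefix_fresh[OF d, of "?m - 1" r] r last_entry by simp
  ultimately show ?thesis by blast
qed

text \<open>Proper nonempty prefixes of different rotations of a distinct list are different:
  the starting entry of the first would reappear inside the second, which would then
  also contain the entry following the second prefix.\<close>

lemma rot_prefix_eq:
  assumes d: "distinct c" and r: "r < length c" "r' < length c" "r \<noteq> r'"
    and k: "k \<le> length c" "k' \<le> length c" and eq: "rot_prefix c r k = rot_prefix c r' k'"
  shows "k = k' \<and> (k = 0 \<or> k = length c)"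
proof -
  let ?m = "length c"
  have kk: "k = k'" using card_rot_prefix[OF d k(1)] card_rot_prefix[OF d k(2)] eq by metis
  have "k = 0 \<or> k = ?m"
  proof (rule ccontr)
    assume "\<not> (k = 0 \<or> k = ?m)"
    then have k0: "0 < k" "k < ?m" using k by auto
    have "c ! r \<in> rot_prefix c r k"
      using rot_prefix_mem[of 0 k c r] rotate_nth_0[OF r(1)] k0 by simp
    then have "c ! r \<in> rot_prefix c r' k" using eq kk by simp
    then obtain t where t: "t < k" "c ! r = rotate r' c ! t"
      using k0 by (auto simp: rot_prefix_def in_set_conv_nth)
    have rt: "r = (r' + t) mod ?m"
    proof -
      have "0 < ?m" using r by linarith
      then have "(r' + t) mod ?m < ?m" by simp
      then show ?thesis using d r t k0 nth_eq_iff_index_eq[of c r "(r' + t) mod ?m"]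
        by (simp add: nth_rotate)
    qed
    have "t \<noteq> 0"
    proof
      assume "t = 0"
      then have "r = r'" using rt r(2) by simp
      then show False using r(3) by simp
    qed
    have "(r + (k - t)) mod ?m = (r' + t + (k - t)) mod ?m"
      unfolding rt by (rule mod_add_left_eq)
    also have "r' + t + (k - t) = r' + k" using t(1) by simp
    finally have "(r + (k - t)) mod ?m = (r' + k) mod ?m" .
    then have "rotate r' c ! k = rotate r c ! (k - t)"
      using k0 t by (simp add: nth_rotate)
    moreover have "rotate r c ! (k - t) \<in> rot_prefix c r k"
      using rot_prefix_mem[of "k - t" k c r] k0 \<open>t \<noteq> 0\<close> t by simp
    ultimately show False using rot_prefix_fresh[OF d k0(2), of r'] eq kk by simp
  qed
  then show ?thesis using kk by simp
qed

definition rot_walk :: "nat set \<Rightarrow> nat list \<Rightarrow> nat \<Rightarrow> nat \<Rightarrow> nat \<Rightarrow> nat set list" where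
  "rot_walk x c r a b = map (\<lambda>k. flip x (rot_prefix c r k)) [a..<Suc b]"

lemma set_rot_walk:
  "y \<in> set (rot_walk x c r a b) \<longleftrightarrow> (\<exists>k. a \<le> k \<and> k \<le> b \<and> y = flip x (rot_prefix c r k))"
  by (auto simp: rot_walk_def)

lemma rot_walk_ends:
  assumes "a \<le> b"
  shows "rot_walk x c r a b \<noteq> []" "hd (rot_walk x c r a b) = flip x (rot_prefix c r a)"
    "last (rot_walk x c r a b) = flip x (rot_prefix c r b)"
  using assms by (simp_all add: rot_walk_def hd_map last_map del: upt_Suc)

lemma length_rot_walk [simp]: "length (rot_walk x c r a b) = Suc b - a"
  by (simp add: rot_walk_def del: upt_Suc)

lemma distinct_rot_walk:
  assumes "distinct c" "b \<le> length c"
  shows "distinct (rot_walk x c r a b)"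
proof -
  have "inj_on (\<lambda>k. flip x (rot_prefix c r k)) {a..<Suc b}"
  proof (rule inj_onI)
    fix k k' assume "k \<in> {a..<Suc b}" "k' \<in> {a..<Suc b}"
      and "flip x (rot_prefix c r k) = flip x (rot_prefix c r k')"
    then have "k \<le> length c" "k' \<le> length c" "rot_prefix c r k = rot_prefix c r k'"
      using assms(2) by (auto simp: flip_eq_iff)
    then show "k = k'" using card_rot_prefix[OF assms(1)] by metis
  qed
  then show ?thesis by (simp add: rot_walk_def distinct_map del: upt_Suc)
qed

lemma rot_walk_subcube:
  assumes "x \<in> subcube v C" "set c \<subseteq> C"
  shows "set (rot_walk x c r a b) \<subseteq> subcube v C"
proof
  fix y assume "y \<in> set (rot_walk x c r a b)"
  then obtain k where "y = flip x (rot_prefix c r k)" by (auto simp: set_rot_walk)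
  moreover have "rot_prefix c r k \<subseteq> C" using rot_prefix_subset assms(2) by blast
  ultimately show "y \<in> subcube v C" using flip_in_subcube assms(1) by blast
qed

abbreviation walk :: "('a \<times> 'a) set \<Rightarrow> 'a list \<Rightarrow> bool" where
  "walk D \<equiv> successively (\<lambda>x y. (x, y) \<in> D)"

lemma successively_iff_nth:
  "successively P xs \<longleftrightarrow> (\<forall>k. Suc k < length xs \<longrightarrow> P (xs ! k) (xs ! Suc k))"
proof (induction P xs rule: successively.induct)
  case (3 P x y xs)
  have "(\<forall>k. Suc k < length (x # y # xs) \<longrightarrow> P ((x # y # xs) ! k) ((x # y # xs) ! Suc k))
      \<longleftrightarrow> P x y \<and> (\<forall>k. Suc k < length (y # xs) \<longrightarrow> P ((y # xs) ! k) ((y # xs) ! Suc k))"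
    by (auto simp: All_less_Suc2 simp del: nth_Cons_Suc)
  then show ?case using 3 by simp
qed auto

lemma dpath_iff_walk:
  "dpath D S s t p \<longleftrightarrow> p \<noteq> [] \<and> hd p = s \<and> last p = t \<and> distinct p \<and> set p \<subseteq> S \<and> walk D p"
  by (simp add: dpath_def successively_iff_nth)

lemma successively_upt:
  "(\<And>k. a \<le> k \<Longrightarrow> k < b \<Longrightarrow> P k (Suc k)) \<Longrightarrow> successively P [a..<Suc b]"
  by (auto simp: successively_iff_nth simp del: upt_Suc)

definition disjoint_paths ::
  "(nat set \<times> nat set) set \<Rightarrow> nat set set \<Rightarrow> nat set \<Rightarrow> nat set \<Rightarrow> nat \<Rightarrow> bool" where
  "disjoint_paths D S s t d \<longleftrightarrow> (\<exists>P :: nat \<Rightarrow> nat set list.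
     (\<forall>i<d. dpath D S s t (P i)) \<and> inj_on P {..<d} \<and>
     (\<forall>i<d. \<forall>j<d. i \<noteq> j \<longrightarrow> set (P i) \<inter> set (P j) \<subseteq> {s, t}))"

lemma disjoint_pathsI:
  assumes paths: "\<And>i. i < d \<Longrightarrow> dpath D S s t (P i)"
    and meet: "\<And>i j. i < d \<Longrightarrow> j < d \<Longrightarrow> i \<noteq> j \<Longrightarrow> set (P i) \<inter> set (P j) \<subseteq> {s, t}"
    and long: "\<And>i j. i < d \<Longrightarrow> j < d \<Longrightarrow> i \<noteq> j \<Longrightarrow> 3 \<le> length (P i) \<or> 3 \<le> length (P j)"
  shows "disjoint_paths D S s t d"
  unfolding disjoint_paths_def
proof (intro exI conjI allI impI)
  show "inj_on P {..<d}"
  proof (rule inj_onI, rule ccontr)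
    fix i j assume i: "i \<in> {..<d}" and j: "j \<in> {..<d}" and eq: "P i = P j" and ne: "i \<noteq> j"
    have "card (set (P i)) \<le> card {s, t}"
      using meet[of i j] i j eq ne by (intro card_mono) auto
    also have "\<dots> \<le> 2" by (simp add: card_insert_if)
    finally have "length (P i) \<le> 2"
      using paths[of i] i by (simp add: dpath_def distinct_card)
    then show False using long[of i j] i j eq ne by auto
  qed
qed (use paths meet in auto)

definition uniform_from :: "(nat set \<times> nat set) set \<Rightarrow> nat set \<Rightarrow> nat set \<Rightarrow> bool" where
  "uniform_from D x C \<longleftrightarrow>
     (\<forall>X i. X \<subseteq> C \<longrightarrow> i \<in> C \<longrightarrow> i \<notin> X \<longrightarrow> (flip x X, flip x (insert i X)) \<in> D)"

lemma walk_rot_walk: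
  assumes uni: "uniform_from D x (set c)" and d: "distinct c" and b: "b \<le> length c"
  shows "walk D (rot_walk x c r a b)"
  unfolding rot_walk_def successively_map
proof (rule successively_upt)
  fix k assume "a \<le> k" "k < b"
  then have k: "k < length c" using b by simp
  then have "rotate r c ! k \<in> set c" by (metis length_rotate nth_mem set_rotate)
  then show "(flip x (rot_prefix c r k), flip x (rot_prefix c r (Suc k))) \<in> D"
    using uni rot_prefix_subset rot_prefix_fresh[OF d k] rot_prefix_Suc[OF k]
    unfolding uniform_from_def by metis
qed

lemma dpath_rot_walk:
  assumes uni: "uniform_from D s (set c)" and d: "distinct c"
    and s: "s \<in> subcube v C" and dirs: "set c \<subseteq> C"
  shows "dpath D (subcube v C) s (flip s (set c)) (rot_walk s c r 0 (length c))"
  unfolding dpath_iff_walk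
  using rot_walk_ends[of 0 "length c" s c r] distinct_rot_walk[OF d, of "length c" s r 0]
    rot_walk_subcube[OF s dirs, of r 0 "length c"] walk_rot_walk[OF uni d, of "length c" r 0]
  by simp

lemma rot_walks_meet:
  assumes d: "distinct c" and ij: "i < length c" "j < length c" "i \<noteq> j"
  shows "set (rot_walk s c i 0 (length c)) \<inter> set (rot_walk s c j 0 (length c))
           \<subseteq> {s, flip s (set c)}"
proof
  fix y assume "y \<in> set (rot_walk s c i 0 (length c)) \<inter> set (rot_walk s c j 0 (length c))"
  then obtain k k' where k: "k \<le> length c" "k' \<le> length c"
    and y: "y = flip s (rot_prefix c i k)" "y = flip s (rot_prefix c j k')"
    by (auto simp: set_rot_walk)
  then have "rot_prefix c i k = rot_prefix c j k'" by (simp add: flip_eq_iff)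
  then have "k = 0 \<or> k = length c" by (rule rot_prefix_eq[OF d ij k, THEN conjunct2])
  then show "y \<in> {s, flip s (set c)}" using y(1) by auto
qed

lemma uniform_disjoint_paths:
  assumes uni: "uniform_from D s (set c)" and d: "distinct c"
    and s: "s \<in> subcube v C" and dirs: "set c \<subseteq> C"
  shows "disjoint_paths D (subcube v C) s (flip s (set c)) (length c)"
proof (rule disjoint_pathsI[where P = "\<lambda>i. rot_walk s c i 0 (length c)"])
  fix i j assume ij: "i < length c" "j < length c" "i \<noteq> j"
  then show "set (rot_walk s c i 0 (length c)) \<inter> set (rot_walk s c j 0 (length c))
           \<subseteq> {s, flip s (set c)}"
    by (rule rot_walks_meet[OF d])
  from ij have "2 \<le> length c" by linarith
  then show "3 \<le> length (rot_walk s c i 0 (length c)) \<or> 3 \<le> length (rot_walk s c j 0 (length c))"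
    by simp
qed (rule dpath_rot_walk[OF assms])

section \<open>Disjoint paths through two parallel uniform subcubes\<close>

definition cross_walk :: "nat \<Rightarrow> nat set \<Rightarrow> nat list \<Rightarrow> nat \<Rightarrow> nat \<Rightarrow> nat set list" where
  "cross_walk N s c r j = rot_walk s c r 0 j @ rot_walk (flip s {N}) c r j (length c)"

lemma set_cross_walk:
  "y \<in> set (cross_walk N s c r j) \<longleftrightarrow>
     (\<exists>k. k \<le> j \<and> y = flip s (rot_prefix c r k)) \<or>
     (\<exists>k. j \<le> k \<and> k \<le> length c \<and> y = flip (flip s {N}) (rot_prefix c r k))"
  by (auto simp: cross_walk_def set_rot_walk)

lemma length_cross_walk: "j \<le> length c \<Longrightarrow> length (cross_walk N s c r j) = length c + 2"
  by (simp add: cross_walk_def)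

text \<open>The schedule used for \<open>m + 1\<close> crossing walks: walk \<open>0\<close> crosses at once and walk \<open>m\<close>
  at the very end, both along rotation \<open>0\<close>; every walk \<open>0 < i < m\<close> follows rotation \<open>i\<close>
  and crosses after \<open>jj i\<close> steps, strictly inside.\<close>

definition sched_rot :: "nat \<Rightarrow> nat \<Rightarrow> nat" where
  "sched_rot m i = (if i = m then 0 else i)"

definition sched_cut :: "nat \<Rightarrow> (nat \<Rightarrow> nat) \<Rightarrow> nat \<Rightarrow> nat" where
  "sched_cut m jj i = (if i = 0 then 0 else if i = m then m else jj i)"

lemma sched_cut_le:
  assumes jj: "\<And>r. 0 < r \<Longrightarrow> r < m \<Longrightarrow> 0 < jj r \<and> jj r < m" and i: "i \<le> m"
  shows "sched_cut m jj i \<le> m"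
  using jj[of i] i by (auto simp: sched_cut_def)

lemma sched_compatible:
  assumes jj: "\<And>r. 0 < r \<Longrightarrow> r < m \<Longrightarrow> 0 < jj r \<and> jj r < m"
    and i: "i \<le> m" "i' \<le> m" "i \<noteq> i'"
  shows "if sched_rot m i = sched_rot m i'
         then min (sched_cut m jj i) (sched_cut m jj i') = 0 \<and> max (sched_cut m jj i) (sched_cut m jj i') = m
         else \<not> (sched_cut m jj i = sched_cut m jj i' \<and> (sched_cut m jj i = 0 \<or> sched_cut m jj i = m))"
proof (cases "sched_rot m i = sched_rot m i'")
  case True
  then have "(i = 0 \<and> i' = m) \<or> (i = m \<and> i' = 0)"
    using i by (auto simp: sched_rot_def split: if_splits)
  then show ?thesis using True i by (auto simp: sched_cut_def)
next
  case False
  have "0 < m" using i by linarith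
  then have at_0: "sched_cut m jj k = 0 \<longleftrightarrow> k = 0"
    and at_m: "sched_cut m jj k = m \<longleftrightarrow> k = m" if "k \<le> m" for k
    using that jj[of k] by (auto simp: sched_cut_def)
  show ?thesis
    using False i(3) at_0[OF i(1)] at_0[OF i(2)] at_m[OF i(1)] at_m[OF i(2)] by auto
qed

context
  fixes D :: "(nat set \<times> nat set) set" and s :: "nat set" and N :: nat and c :: "nat list"
    and v C :: "nat set"
  assumes distinct_c: "distinct c" and N_notin: "N \<notin> set c"
    and uniform_bottom: "uniform_from D s (set c)"
    and uniform_top: "uniform_from D (flip s {N}) (set c)"
    and s_in: "s \<in> subcube v C" and dirs: "insert N (set c) \<subseteq> C"
begin

text \<open>The two parallel subcubes are told apart by the coordinate \<open>N\<close>.\<close>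

lemma N_in_rot_flip: "N \<in> flip x (rot_prefix c r k) \<longleftrightarrow> N \<in> x"
  using N_notin rot_prefix_subset by (auto simp: mem_flip)

lemma sides_apart: "flip s (rot_prefix c r k) \<noteq> flip (flip s {N}) (rot_prefix c r' k')"
proof
  assume "flip s (rot_prefix c r k) = flip (flip s {N}) (rot_prefix c r' k')"
  then have "N \<in> s \<longleftrightarrow> N \<in> flip s {N}"
    using N_in_rot_flip[of s r k] N_in_rot_flip[of "flip s {N}" r' k'] by simp
  then show False by (simp add: mem_flip)
qed

lemma top_in: "flip s {N} \<in> subcube v C"
  using flip_in_subcube[OF s_in] dirs by simp

lemma dpath_cross_walk:
  assumes j: "j \<le> length c"
    and cross: "(flip s (rot_prefix c r j), flip (flip s {N}) (rot_prefix c r j)) \<in> D"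
  shows "dpath D (subcube v C) s (flip (flip s {N}) (set c)) (cross_walk N s c r j)"
proof -
  let ?B = "rot_walk s c r 0 j" and ?T = "rot_walk (flip s {N}) c r j (length c)"
  have ends: "?B \<noteq> []" "?T \<noteq> []" "hd ?B = s" "last ?T = flip (flip s {N}) (set c)"
    "last ?B = flip s (rot_prefix c r j)" "hd ?T = flip (flip s {N}) (rot_prefix c r j)"
    using rot_walk_ends[of 0 j s c r] rot_walk_ends[of j "length c" "flip s {N}" c r] j by simp_all
  have "set ?B \<inter> set ?T = {}"
    using sides_apart by (auto simp: set_rot_walk)
  then have "distinct (?B @ ?T)"
    using distinct_rot_walk[OF distinct_c] j by simp
  moreover have "set (?B @ ?T) \<subseteq> subcube v C"
    using rot_walk_subcube[OF s_in] rot_walk_subcube[OF top_in] dirs by auto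
  moreover have "walk D (?B @ ?T)"
    using walk_rot_walk[OF uniform_bottom distinct_c j] walk_rot_walk[OF uniform_top distinct_c]
      ends cross by (simp add: successively_append_iff)
  ultimately show ?thesis
    using ends unfolding dpath_iff_walk cross_walk_def by simp
qed

lemma cross_walks_meet:
  assumes r: "r < length c" "r' < length c" and j: "j \<le> length c" "j' \<le> length c"
    and compatible: "if r = r' then min j j' = 0 \<and> max j j' = length c
                     else \<not> (j = j' \<and> (j = 0 \<or> j = length c))"
  shows "set (cross_walk N s c r j) \<inter> set (cross_walk N s c r' j')
           \<subseteq> {s, flip (flip s {N}) (set c)}"
proof
  let ?m = "length c"
  have same_prefix: "k = k' \<and> (r \<noteq> r' \<longrightarrow> k = 0 \<or> k = ?m)"
    if "k \<le> ?m" "k' \<le> ?m" "rot_prefix c r k = rot_prefix c r' k'" for k k'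
    using that card_rot_prefix[OF distinct_c] rot_prefix_eq[OF distinct_c r] by metis
  fix y assume "y \<in> set (cross_walk N s c r j) \<inter> set (cross_walk N s c r' j')"
  then have on_walks: "y \<in> set (cross_walk N s c r j)" "y \<in> set (cross_walk N s c r' j')" by auto
  consider
      (bottom) k k' where "k \<le> j" "k' \<le> j'"
        "y = flip s (rot_prefix c r k)" "y = flip s (rot_prefix c r' k')"
    | (top) k k' where "j \<le> k" "k \<le> ?m" "j' \<le> k'" "k' \<le> ?m"
        "y = flip (flip s {N}) (rot_prefix c r k)" "y = flip (flip s {N}) (rot_prefix c r' k')"
    using on_walks[unfolded set_cross_walk] sides_apart by blast
  then show "y \<in> {s, flip (flip s {N}) (set c)}"
  proof cases
    case bottom
    have k: "k \<le> ?m" "k' \<le> ?m" using bottom(1,2) j by auto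
    have "rot_prefix c r k = rot_prefix c r' k'" using bottom(3,4) by (simp add: flip_eq_iff)
    then have "k = k' \<and> (r \<noteq> r' \<longrightarrow> k = 0 \<or> k = ?m)" by (rule same_prefix[OF k])
    then have "k = 0" using bottom(1,2) j compatible by (auto split: if_splits)
    then show ?thesis using bottom(3) by simp
  next
    case top
    have "rot_prefix c r k = rot_prefix c r' k'" using top(5,6) by (simp add: flip_eq_iff)
    then have "k = k' \<and> (r \<noteq> r' \<longrightarrow> k = 0 \<or> k = ?m)" by (rule same_prefix[OF top(2,4)])
    then have "k = ?m" using top(1-4) compatible by (auto split: if_splits)
    then show ?thesis using top(5) by simp
  qed
qed

text \<open>With crossing arcs at the first and the last prefix, and for every other rotation at
  some proper nonempty prefix, there are \<open>|c| + 1\<close> disjoint paths from \<open>s\<close> to the far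
  corner: the rotation \<open>0\<close> is used twice (crossing first and crossing last), every other
  rotation once.\<close>

lemma crossing_disjoint_paths:
  assumes first_cross: "(s, flip s {N}) \<in> D"
    and last_cross: "(flip s (set c), flip (flip s {N}) (set c)) \<in> D"
    and switch: "\<And>r. 0 < r \<Longrightarrow> r < length c \<Longrightarrow> \<exists>j. 0 < j \<and> j < length c \<and>
       (flip s (rot_prefix c r j), flip (flip s {N}) (rot_prefix c r j)) \<in> D"
  shows "disjoint_paths D (subcube v C) s (flip (flip s {N}) (set c)) (Suc (length c))"
proof -
  let ?m = "length c"
  have switch_all: "\<forall>r. \<exists>j. 0 < r \<and> r < ?m \<longrightarrow> 0 < j \<and> j < ?m \<and>
      (flip s (rot_prefix c r j), flip (flip s {N}) (rot_prefix c r j)) \<in> D"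
    using switch by blast
  obtain jj where jj_all: "\<forall>r. 0 < r \<and> r < ?m \<longrightarrow> 0 < jj r \<and> jj r < ?m \<and>
      (flip s (rot_prefix c r (jj r)), flip (flip s {N}) (rot_prefix c r (jj r))) \<in> D"
    using choice[OF switch_all] by blast
  then have jj: "0 < jj r \<and> jj r < ?m \<and>
      (flip s (rot_prefix c r (jj r)), flip (flip s {N}) (rot_prefix c r (jj r))) \<in> D"
    if "0 < r" "r < ?m" for r
    using jj_all that by blast
  have jj_le: "\<And>r. 0 < r \<Longrightarrow> r < ?m \<Longrightarrow> 0 < jj r \<and> jj r < ?m" using jj by blast
  let ?rot = "sched_rot ?m" and ?cut = "sched_cut ?m jj"
  have crossing: "(flip s (rot_prefix c (?rot i) (?cut i)),
                   flip (flip s {N}) (rot_prefix c (?rot i) (?cut i))) \<in> D" if "i \<le> ?m" for i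
    using that first_cross last_cross jj[of i] by (auto simp: sched_rot_def sched_cut_def)
  show ?thesis
  proof (rule disjoint_pathsI[where P = "\<lambda>i. cross_walk N s c (?rot i) (?cut i)"])
    fix i assume "i < Suc ?m"
    then show "dpath D (subcube v C) s (flip (flip s {N}) (set c)) (cross_walk N s c (?rot i) (?cut i))"
      using dpath_cross_walk sched_cut_le[OF jj_le] crossing by simp
  next
    fix i i' assume i: "i < Suc ?m" "i' < Suc ?m" "i \<noteq> i'"
    then have "?rot i < ?m" "?rot i' < ?m" by (auto simp: sched_rot_def)
    then show "set (cross_walk N s c (?rot i) (?cut i)) \<inter> set (cross_walk N s c (?rot i') (?cut i'))
               \<subseteq> {s, flip (flip s {N}) (set c)}"
      using cross_walks_meet sched_compatible[OF jj_le] sched_cut_le[OF jj_le] i by simp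
    show "3 \<le> length (cross_walk N s c (?rot i) (?cut i)) \<or>
          3 \<le> length (cross_walk N s c (?rot i') (?cut i'))"
      using sched_cut_le[OF jj_le] i by (simp add: length_cross_walk)
  qed
qed

text \<open>With arcs from \<open>s\<close> across and back from the far corner of the other subcube, the
  rotation walks from \<open>s\<close> together with a detour through the other subcube form
  \<open>|c| + 1\<close> disjoint paths from \<open>s\<close> to its antipode in the first subcube.\<close>

lemma return_disjoint_paths:
  assumes nonempty: "c \<noteq> []"
    and out_arc: "(s, flip s {N}) \<in> D"
    and return_arc: "(flip (flip s {N}) (set c), flip s (set c)) \<in> D"
  shows "disjoint_paths D (subcube v C) s (flip s (set c)) (Suc (length c))"
proof -
  let ?m = "length c" and ?t = "flip s (set c)"
  let ?T = "rot_walk (flip s {N}) c 0 0 ?m"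
  define detour where "detour = s # ?T @ [?t]"
  have T_ends: "?T \<noteq> []" "hd ?T = flip s {N}" "last ?T = flip (flip s {N}) (set c)"
    using rot_walk_ends[of 0 ?m "flip s {N}" c 0] by simp_all
  have apart: "s \<notin> set ?T" "?t \<notin> set ?T"
    using sides_apart[of 0 0] sides_apart[of 0 ?m] by (auto simp: set_rot_walk)
  have "s \<noteq> ?t" using nonempty by (metis flip_empty flip_eq_iff set_empty)
  then have "dpath D (subcube v C) s ?t detour"
    unfolding dpath_iff_walk detour_def
    using apart T_ends distinct_rot_walk[OF distinct_c] rot_walk_subcube[OF top_in, of c 0 0 ?m]
      walk_rot_walk[OF uniform_top distinct_c, of ?m 0 0] out_arc return_arc s_in flip_in_subcube[OF s_in] dirs
    by (auto simp: successively_append_iff successively_Cons)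
  moreover have "set (rot_walk s c i 0 ?m) \<inter> set detour \<subseteq> {s, ?t}" for i
    using sides_apart by (auto simp: set_rot_walk detour_def)
  ultimately show ?thesis
    using dpath_rot_walk[OF uniform_bottom distinct_c s_in] rot_walks_meet[OF distinct_c] dirs
    by (intro disjoint_pathsI[where P = "\<lambda>i. if i < ?m then rot_walk s c i 0 ?m else detour"])
      (auto simp: detour_def)
qed

end

section \<open>Up-sets and the choice of crossing points\<close>

definition upset :: "nat \<Rightarrow> nat set set \<Rightarrow> bool" where
  "upset N U \<longleftrightarrow> (\<forall>x y. x \<in> U \<longrightarrow> x \<subseteq> y \<longrightarrow> y \<subseteq> {..<N} \<longrightarrow> y \<in> U)"

text \<open>If every element \<open>i\<close> of \<open>C\<close> satisfies \<open>G {i}\<close> or \<open>G (C - {i})\<close>, then \<open>C\<close> can be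
  enumerated so that every rotation other than the \<open>0\<close>-th has a proper nonempty prefix
  satisfying \<open>G\<close>: list first the elements with \<open>\<not> G {i}\<close>, then the others.  A rotation
  starting at an element of the second kind takes its one-element prefix; one starting
  inside the first block omits only its predecessor, which again lies in the first block.\<close>

lemma switching_order:
  assumes fin: "finite C" and either: "\<And>i. i \<in> C \<Longrightarrow> G {i} \<or> G (C - {i})"
  shows "\<exists>c. distinct c \<and> set c = C \<and>
           (\<forall>r. 0 < r \<longrightarrow> r < length c \<longrightarrow> (\<exists>j. 0 < j \<and> j < length c \<and> G (rot_prefix c r j)))"
proof -
  define P where "P = {i \<in> C. \<not> G {i}}"
  define ps where "ps = sorted_list_of_set P"
  define qs where "qs = sorted_list_of_set (C - P)"
  define c where "c = ps @ qs"
  have fin_P: "finite P" using fin by (simp add: P_def)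
  have set_c: "set c = C" and distinct_c: "distinct c"
    using fin fin_P by (auto simp: c_def ps_def qs_def P_def)
  have first_block: "c ! k \<in> P \<longleftrightarrow> k < length ps" if "k < length c" for k
  proof (cases "k < length ps")
    case True
    then have "ps ! k \<in> set ps" by (rule nth_mem)
    then show ?thesis using True fin_P by (simp add: c_def nth_append ps_def)
  next
    case False
    then have "c ! k = qs ! (k - length ps)" "k - length ps < length qs"
      using that by (simp_all add: c_def nth_append)
    then have "c ! k \<in> C - P" using fin by (metis nth_mem qs_def set_sorted_list_of_set finite_Diff)
    then show ?thesis using False by simp
  qed
  have "\<exists>j. 0 < j \<and> j < length c \<and> G (rot_prefix c r j)" if r: "0 < r" "r < length c" for r
  proof (cases "c ! r \<in> P")
    case False
    then have "G {c ! r}" using r set_c nth_mem P_def by blast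
    then show ?thesis using rot_prefix_one[OF r(2)] r by (intro exI[of _ 1]) simp
  next
    case True
    then have "r - 1 < length ps" using first_block r by simp
    then have "c ! (r - 1) \<in> P" using first_block r by simp
    then have "G (C - {c ! (r - 1)})" using either unfolding P_def by blast
    then show ?thesis
      using rot_prefix_all_but_one[OF distinct_c r] set_c r by (intro exI[of _ "length c - 1"]) simp
  qed
  then show ?thesis using set_c distinct_c by blast
qed

lemma upset_switch:
  assumes up: "upset N U" and x: "x \<subseteq> {..<N}" and C: "C \<subseteq> {..<N}"
    and antipode: "flip x C \<in> U \<longleftrightarrow> x \<in> U" and i: "i \<in> C"
  shows "(flip x {i} \<in> U \<longleftrightarrow> x \<in> U) \<or> (flip x (C - {i}) \<in> U \<longleftrightarrow> x \<in> U)"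
proof -
  have in_cube: "flip x X \<subseteq> {..<N}" if "X \<subseteq> C" for X
    using that x C by (auto simp: flip_def)
  have mono: "y \<in> U \<Longrightarrow> y \<subseteq> z \<Longrightarrow> z \<subseteq> {..<N} \<Longrightarrow> z \<in> U" for y z
    using up unfolding upset_def by blast
  show ?thesis
  proof (cases "i \<in> x")
    case True
    have "flip x {i} \<subseteq> x" "flip x C \<subseteq> flip x (C - {i})" using True by (auto simp: flip_def)
    then show ?thesis using mono antipode x in_cube[of "C - {i}"] by blast
  next
    case False
    have "x \<subseteq> flip x {i}" "flip x (C - {i}) \<subseteq> flip x C" using False i by (auto simp: flip_def)
    then show ?thesis using mono antipode in_cube[of "{i}"] in_cube[of C] i by blast
  qed
qed

section \<open>The orientations lifted from an up-set\<close>

text \<open>The orientation of the \<open>(N+1)\<close>-cube attached to \<open>U\<close>: all edges in the directions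
  \<open>i < N\<close> point upwards, and the edge in direction \<open>N\<close> at a vertex \<open>u\<close> of the bottom
  facet points up iff \<open>u \<in> U\<close>.  The parameter \<open>F\<close> additionally reverses the directions
  in \<open>F\<close>; the theorem concerns \<open>F = {}\<close>, the other values are its reorientations.\<close>

definition lift_out :: "nat \<Rightarrow> nat set set \<Rightarrow> nat set \<Rightarrow> nat set \<Rightarrow> nat \<Rightarrow> bool" where
  "lift_out N U F u i \<longleftrightarrow> (if i < N then i \<notin> u else (u - {N} \<in> U) \<noteq> (N \<in> u)) \<noteq> (i \<in> F)"

abbreviation lifted :: "nat \<Rightarrow> nat set set \<Rightarrow> nat set \<Rightarrow> (nat set \<times> nat set) set" where
  "lifted N U F \<equiv> out_orient (Suc N) (lift_out N U F)"

lemma lift_out_below: "i < N \<Longrightarrow> lift_out N U F u i \<longleftrightarrow> (i \<notin> u) \<noteq> (i \<in> F)"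
  by (simp add: lift_out_def)

lemma lift_out_top: "lift_out N U F u N \<longleftrightarrow> ((u - {N} \<in> U) \<noteq> (N \<in> u)) \<noteq> (N \<in> F)"
  by (simp add: lift_out_def)

lemma consistent_lift_out: "consistent_out (Suc N) (lift_out N U F)"
  unfolding consistent_out_def
proof (intro allI impI)
  fix u i assume i: "i < Suc N"
  show "lift_out N U F (flip u {i}) i = (\<not> lift_out N U F u i)"
  proof (cases "i < N")
    case True
    then show ?thesis by (simp add: lift_out_below mem_flip)
  next
    case False
    then have "i = N" using i by simp
    moreover have "flip u {N} - {N} = u - {N}" by (auto simp: flip_def)
    ultimately show ?thesis by (simp add: lift_out_top mem_flip) argo
  qed
qed

lemma reorient_lifted: "reorient (lifted N U {}) F = lifted N U F"
proof -
  have "(\<lambda>u i. lift_out N U {} u i \<noteq> (i \<in> F)) = lift_out N U F"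
    by (auto simp: lift_out_def fun_eq_iff)
  then show ?thesis using reorient_out_orient[OF consistent_lift_out] by metis
qed

text \<open>In every subcube there is exactly one vertex at which all subcube edges enter:
  its coordinates below \<open>N\<close> inside the subcube are dictated by \<open>F\<close>, and then the
  coordinate \<open>N\<close> is dictated by \<open>U\<close>.\<close>

lemma inward_lifted_unique:
  assumes C: "C \<subseteq> {..<Suc N}"
    and w1: "w1 \<in> subcube v C" "\<forall>i\<in>C. \<not> lift_out N U F w1 i"
    and w2: "w2 \<in> subcube v C" "\<forall>i\<in>C. \<not> lift_out N U F w2 i"
  shows "w1 = w2"
proof -
  have off_top: "x \<in> w1 \<longleftrightarrow> x \<in> w2" if "x \<noteq> N" for x
  proof (cases "x \<in> C")
    case True
    then have "x < N" using C that by auto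
    moreover have "\<not> lift_out N U F w1 x" "\<not> lift_out N U F w2 x" using True w1(2) w2(2) by auto
    ultimately show ?thesis by (simp add: lift_out_below)
  next
    case False
    then show ?thesis using w1(1) w2(1) by (auto simp: subcube_iff)
  qed
  then have "w1 - {N} = w2 - {N}" by auto
  have "N \<in> w1 \<longleftrightarrow> N \<in> w2"
  proof (cases "N \<in> C")
    case True
    then have "\<not> lift_out N U F w1 N" "\<not> lift_out N U F w2 N" using w1(2) w2(2) by auto
    then show ?thesis using \<open>w1 - {N} = w2 - {N}\<close> by (simp add: lift_out_top) blast
  next
    case False
    then show ?thesis using w1(1) w2(1) by (simp add: subcube_iff)
  qed
  then show ?thesis using off_top by (intro set_eqI) metis
qed

lemma inward_lifted_exists:
  assumes C: "C \<subseteq> {..<Suc N}"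
  shows "\<exists>w. w \<in> subcube v C \<and> (\<forall>i\<in>C. \<not> lift_out N U F w i)"
proof -
  define base where "base = (v - C) \<union> {i\<in>C. i < N \<and> i \<notin> F}"
  define w where "w = (if N \<in> C \<and> ((base \<in> U) \<noteq> (N \<in> F)) then insert N base else base)"
  have "w \<in> subcube v C" by (auto simp: subcube_iff w_def base_def)
  moreover have "\<not> lift_out N U F w i" if i: "i \<in> C" for i
  proof (cases "i < N")
    case True
    then show ?thesis using i by (auto simp: lift_out_below w_def base_def)
  next
    case False
    then have "i = N" using i C by auto
    moreover have "w - {N} = base" using i \<open>i = N\<close> by (auto simp: w_def base_def)
    ultimately show ?thesis using i by (auto simp: lift_out_top w_def)
  qed
  ultimately show ?thesis by blast
qed

lemma USO_lifted: "USO (Suc N) (lifted N U F)"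
proof (rule USO_out_orient[OF consistent_lift_out])
  fix v C assume C: "C \<subseteq> {..<Suc N}"
  obtain w where "w \<in> subcube v C \<and> (\<forall>i\<in>C. \<not> lift_out N U F w i)"
    using inward_lifted_exists[OF C] by blast
  then show "\<exists>!w. w \<in> subcube v C \<and> (\<forall>i\<in>C. \<not> lift_out N U F w i)"
    using inward_lifted_unique[OF C] by blast
qed

text \<open>Without reversals every arc increases the potential \<open>2 |u - {N}| + [u has an inward
  N-edge]\<close>, so there are no directed cycles.\<close>

lemma acyclic_lifted: "acyclic (lifted N U {})"
proof -
  define f where "f u = 2 * card (u - {N}) + (if lift_out N U {} u N then 0 else (1::nat))" for u
  have "lifted N U {} \<subseteq> measure f"
  proof clarify
    fix a b assume "(a, b) \<in> lifted N U {}"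
    then obtain i where i: "cube_vertex (Suc N) a" "i < Suc N" "b = flip a {i}" "lift_out N U {} a i"
      by (auto simp: out_orient_iff)
    have fin: "finite (a - {N})"
      using i(1) finite_subset unfolding cube_vertex_def by blast
    show "(a, b) \<in> measure f"
    proof (cases "i < N")
      case True
      then have "i \<notin> a" using i(4) by (simp add: lift_out_below)
      then have "b - {N} = insert i (a - {N})" using i(3) True by (auto simp: flip_def)
      then show ?thesis using fin \<open>i \<notin> a\<close> by (simp add: f_def)
    next
      case False
      then have "i = N" using i(2) by simp
      have "b - {N} = a - {N}" using i(3) \<open>i = N\<close> by (auto simp: flip_def)
      moreover have "\<not> lift_out N U {} b N"
        using i(3,4) \<open>i = N\<close> consistent_lift_out[of N U "{}", unfolded consistent_out_def] by simp
      ultimately show ?thesis using i(4) \<open>i = N\<close> by (simp add: f_def)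
    qed
  qed
  then show ?thesis by (rule acyclic_subset[OF wf_acyclic[OF wf_measure]])
qed

text \<open>Two upward out-edges at \<open>u\<close> stay out-edges one step up, since
  directions below \<open>N\<close> are always upward and \<open>U\<close> is an up-set; two upward in-edges at
  \<open>u\<close> are impossible, since at least one of them has a direction below \<open>N\<close>.\<close>

lemma upward_out_edge_persists:
  assumes up: "upset N U" and u: "cube_vertex (Suc N) u" and ij: "i \<noteq> j" "i < Suc N" "j < Suc N"
    and fresh: "i \<notin> u" "j \<notin> u" and out_j: "lift_out N U {} u j"
  shows "lift_out N U {} (flip u {i}) j"
proof (cases "j < N")
  case True
  then show ?thesis using fresh ij by (simp add: lift_out_below mem_flip)
next
  case False
  then have jN: "j = N" and iN: "i < N" using ij by auto
  have "u - {N} \<in> U" using out_j jN fresh by (simp add: lift_out_top)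
  moreover have "u - {N} \<subseteq> flip u {i} - {N}" using fresh by (auto simp: flip_def)
  moreover have "flip u {i} - {N} \<subseteq> {..<N}" using u iN
    by (auto simp: flip_def cube_vertex_def less_Suc_eq)
  ultimately have "flip u {i} - {N} \<in> U" using up unfolding upset_def by blast
  moreover have "N \<notin> flip u {i}" using fresh jN iN by (simp add: mem_flip)
  ultimately show ?thesis using jN by (simp add: lift_out_top)
qed

lemma locally_uniform_lifted:
  assumes up: "upset N U"
  shows "locally_uniform (Suc N) (lifted N U {})"
  unfolding locally_uniform_def
proof (intro allI impI, rule conjI; rule impI)
  fix u i j assume u: "cube_vertex (Suc N) u" and i: "i < Suc N" and j: "j < Suc N"
    and ij: "i \<noteq> j" and iu: "i \<notin> u" and ju: "j \<notin> u"
  have square: "flip u {i, j} = flip (flip u {i}) {j}" "flip u {i, j} = flip (flip u {j}) {i}"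
    using ij by (auto simp: flip_def)
  have corners: "cube_vertex (Suc N) (flip u {i})" "cube_vertex (Suc N) (flip u {j})"
    using u i j cube_vertex_flip by auto
  show "(flip u {i}, flip u {i, j}) \<in> lifted N U {} \<and> (flip u {j}, flip u {i, j}) \<in> lifted N U {}"
    if "(u, flip u {i}) \<in> lifted N U {} \<and> (u, flip u {j}) \<in> lifted N U {}"
  proof -
    have "lift_out N U {} u i" "lift_out N U {} u j" using that out_orient_edge by blast+
    then have "lift_out N U {} (flip u {i}) j" "lift_out N U {} (flip u {j}) i"
      using upward_out_edge_persists[OF up u] ij i j iu ju by metis+
    then show ?thesis
      using corners i j square(1) out_orient_edge[of "flip u {j}" i]
      by (simp add: out_orient_edge square(2))
  qed
  show "(flip u {i, j}, flip u {i}) \<in> lifted N U {} \<and> (flip u {i, j}, flip u {j}) \<in> lifted N U {}"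
    if "(flip u {i}, u) \<in> lifted N U {} \<and> (flip u {j}, u) \<in> lifted N U {}"
  proof -
    have "\<not> lift_out N U {} u i" "\<not> lift_out N U {} u j"
      using that out_orient_edge_back[OF consistent_lift_out u] i j by blast+
    moreover have "i < N \<or> j < N" using i j ij by auto
    ultimately show ?thesis using iu ju by (auto simp: lift_out_below)
  qed
qed

section \<open>The lifted orientations are Holt--Klee\<close>

text \<open>Where all directions below \<open>N\<close> of a subcube leave \<open>x\<close>, the subcube is oriented
  uniformly away from \<open>x\<close>, since these directions only depend on their own coordinate.\<close>

lemma uniform_lifted:
  assumes x: "cube_vertex (Suc N) x" and C: "C \<subseteq> {..<N}" and out: "\<forall>i\<in>C. lift_out N U F x i"
  shows "uniform_from (lifted N U F) x C"
  unfolding uniform_from_def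
proof (intro allI impI)
  fix X i assume X: "X \<subseteq> C" and i: "i \<in> C" "i \<notin> X"
  have iN: "i < N" using i C by auto
  have "flip x (insert i X) = flip (flip x X) {i}" using i by (auto simp: flip_def)
  moreover have "X \<subseteq> {..<Suc N}" using X C by auto
  then have "cube_vertex (Suc N) (flip x X)" by (rule cube_vertex_flip[OF x])
  moreover have "lift_out N U F x i" using out i(1) by blast
  then have "lift_out N U F (flip x X) i" using iN i(2) by (simp add: lift_out_below mem_flip)
  ultimately show "(flip x X, flip x (insert i X)) \<in> lifted N U F" using iN by (simp add: out_orient_edge)
qed

lemma top_arc_lifted:
  assumes x: "cube_vertex (Suc N) x" and X: "X \<subseteq> {..<N}"
  shows "(flip x X, flip (flip x {N}) X) \<in> lifted N U F \<longleftrightarrow>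
           ((flip (x - {N}) X \<in> U) \<noteq> (N \<in> x)) \<noteq> (N \<in> F)"
proof -
  have "N \<notin> X" using X by auto
  then have "flip (flip x {N}) X = flip (flip x X) {N}" "flip x X - {N} = flip (x - {N}) X"
    "N \<in> flip x X \<longleftrightarrow> N \<in> x"
    by (auto simp: flip_def)
  moreover have "X \<subseteq> {..<Suc N}" using X by auto
  then have "cube_vertex (Suc N) (flip x X)" by (rule cube_vertex_flip[OF x])
  ultimately show ?thesis by (simp add: out_orient_edge lift_out_top)
qed

context
  fixes N :: nat and U :: "nat set set" and F v C s t :: "nat set"
  assumes v: "cube_vertex (Suc N) v" and C: "C \<subseteq> {..<Suc N}"
    and source: "is_source (lifted N U F) (subcube v C) s"
    and sink: "is_sink (lifted N U F) (subcube v C) t"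
begin

lemma lower_dirs: "C - {N} \<subseteq> {..<N}"
  using C by (auto simp: less_Suc_eq)

lemma source_facts: "s \<in> subcube v C" "\<forall>i\<in>C. lift_out N U F s i" "cube_vertex (Suc N) s"
  using source source_out_orient[OF consistent_lift_out v C] subcube_vertex[OF v C] by auto

lemma sink_facts: "t \<in> subcube v C" "\<forall>i\<in>C. \<not> lift_out N U F t i"
  using sink sink_out_orient[OF v C] by auto

lemma sink_off_top: "x \<noteq> N \<Longrightarrow> x \<in> t \<longleftrightarrow> x \<in> flip s C"
proof (cases "x \<in> C")
  case True
  moreover assume "x \<noteq> N"
  ultimately have "x < N" using C by auto
  moreover have "lift_out N U F s x" "\<not> lift_out N U F t x" using source_facts sink_facts True by auto
  ultimately show ?thesis using True by (simp add: lift_out_below mem_flip)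
next
  case False
  then show ?thesis using source_facts(1) sink_facts(1) by (simp add: subcube_iff mem_flip)
qed

lemma sink_eq_flip:
  assumes dirs: "X - {N} = C - {N}" and top: "N \<in> t \<longleftrightarrow> N \<in> flip s X"
  shows "t = flip s X"
proof (rule set_eqI)
  fix x show "x \<in> t \<longleftrightarrow> x \<in> flip s X"
  proof (cases "x = N")
    case True
    then show ?thesis using top by simp
  next
    case False
    then have "x \<in> X \<longleftrightarrow> x \<in> C" using dirs by blast
    then show ?thesis using sink_off_top[OF False] by (simp add: mem_flip)
  qed
qed

lemma uniform_at_source:
  assumes "C' \<subseteq> C - {N}"
  shows "uniform_from (lifted N U F) s C'" "uniform_from (lifted N U F) (flip s {N}) C'"
proof -
  have C': "C' \<subseteq> {..<N}" using assms lower_dirs by blast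
  have "lift_out N U F (flip s {N}) i" if "i \<in> C'" for i
  proof -
    have "i < N" "lift_out N U F s i" using that C' assms source_facts(2) by auto
    then show ?thesis by (simp add: lift_out_below mem_flip)
  qed
  then show "uniform_from (lifted N U F) (flip s {N}) C'"
    using uniform_lifted[OF _ C'] cube_vertex_flip[OF source_facts(3), of "{N}"] by simp
  have "\<forall>i\<in>C'. lift_out N U F s i" using source_facts(2) assms by blast
  then show "uniform_from (lifted N U F) s C'" by (rule uniform_lifted[OF source_facts(3) C'])
qed

text \<open>Case 1: direction \<open>N\<close> is not in the subcube, which is then uniform.\<close>

lemma paths_without_top:
  assumes "N \<notin> C"
  shows "disjoint_paths (lifted N U F) (subcube v C) s t (card C)"
proof -
  define c where "c = sorted_list_of_set C"
  have fin: "finite C" using C finite_subset by blast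
  then have c: "distinct c" "set c = C" "length c = card C" by (simp_all add: c_def)
  have "N \<in> t \<longleftrightarrow> N \<in> flip s C"
    using source_facts(1) sink_facts(1) assms by (simp add: subcube_iff mem_flip)
  then have "t = flip s C" by (rule sink_eq_flip[OF refl])
  then show ?thesis
    using uniform_disjoint_paths[of _ s c v C] uniform_at_source(1)[of C] assms c source_facts(1)
    by auto
qed

text \<open>Case 2: source and sink agree in direction \<open>N\<close>; there is one extra path through
  the parallel subcube, reached at the source and left at the sink.\<close>

lemma paths_returning:
  assumes N: "N \<in> C" and agree: "N \<in> t \<longleftrightarrow> N \<in> s"
  shows "disjoint_paths (lifted N U F) (subcube v C) s t (card C)"
proof -
  define c where "c = sorted_list_of_set (C - {N})"
  have fin: "finite C" using C finite_subset by blast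
  then have c: "distinct c" "set c = C - {N}" "length c = card (C - {N})"
    by (simp_all add: c_def)
  have card_C: "card C = Suc (length c)" using card_Suc_Diff1[OF fin N] c(3) by simp
  have t: "t = flip s (set c)"
    using sink_eq_flip[of "C - {N}"] agree c(2) by (simp add: mem_flip)
  have "lift_out N U F s N" "\<not> lift_out N U F t N" using source_facts(2) sink_facts(2) N by auto
  then have "s \<noteq> t" by auto
  then have "c \<noteq> []" using t by auto
  have out_arc: "(s, flip s {N}) \<in> lifted N U F"
    using source_facts N by (simp add: out_orient_edge)
  have "cube_vertex (Suc N) t" using subcube_vertex[OF v C sink_facts(1)] .
  then have "(flip t {N}, t) \<in> lifted N U F"
    using out_orient_edge_back[OF consistent_lift_out] \<open>\<not> lift_out N U F t N\<close> N C by blast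
  moreover have "flip t {N} = flip (flip s {N}) (set c)" using t c(2) by (auto simp: flip_def)
  ultimately have return_arc: "(flip (flip s {N}) (set c), flip s (set c)) \<in> lifted N U F"
    using t by simp
  have dirs: "insert N (set c) \<subseteq> C" and N_notin: "N \<notin> set c" using c(2) N by auto
  have uni: "uniform_from (lifted N U F) s (set c)" "uniform_from (lifted N U F) (flip s {N}) (set c)"
    using uniform_at_source[of "set c"] c(2) by simp_all
  have "disjoint_paths (lifted N U F) (subcube v C) s (flip s (set c)) (Suc (length c))"
    by (rule return_disjoint_paths[OF c(1) N_notin uni source_facts(1) dirs \<open>c \<noteq> []\<close> out_arc return_arc])
  then show ?thesis using t card_C by simp
qed

lemma crossing_arc_iff:
  assumes N: "N \<in> C" and X: "X \<subseteq> C - {N}"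
  shows "(flip s X, flip (flip s {N}) X) \<in> lifted N U F \<longleftrightarrow> (flip (s - {N}) X \<in> U \<longleftrightarrow> s - {N} \<in> U)"
proof -
  have below: "X \<subseteq> {..<N}" using X lower_dirs by blast
  have "(s, flip s {N}) \<in> lifted N U F" using source_facts N by (simp add: out_orient_edge)
  then have "((s - {N} \<in> U) \<noteq> (N \<in> s)) \<noteq> (N \<in> F)"
    using top_arc_lifted[OF source_facts(3), of "{}"] by simp
  then show ?thesis using top_arc_lifted[OF source_facts(3) below] by auto
qed

text \<open>Case 3: source and sink differ in direction \<open>N\<close>; every path crosses once, and the
  up-set property of \<open>U\<close> provides the crossing points.\<close>

lemma paths_crossing:
  assumes up: "upset N U" and N: "N \<in> C" and differ: "N \<in> t \<longleftrightarrow> N \<notin> s"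
  shows "disjoint_paths (lifted N U F) (subcube v C) s t (card C)"
proof -
  let ?D = "lifted N U F" and ?C' = "C - {N}" and ?s0 = "s - {N}"
  have fin: "finite C" using C finite_subset by blast
  have C': "?C' \<subseteq> {..<N}" by (rule lower_dirs)
  have s0: "?s0 \<subseteq> {..<N}" using source_facts(3) by (auto simp: cube_vertex_def less_Suc_eq)
  have "t = flip s C" using sink_eq_flip[of C] differ N by (simp add: mem_flip)
  then have t: "t = flip (flip s {N}) ?C'" using N by (auto simp: flip_def)
  define G where "G X \<longleftrightarrow> (flip s X, flip (flip s {N}) X) \<in> ?D" for X
  have G_same: "G X \<longleftrightarrow> (flip ?s0 X \<in> U \<longleftrightarrow> ?s0 \<in> U)" if "X \<subseteq> ?C'" for X
    unfolding G_def by (rule crossing_arc_iff[OF N that])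
  have "G {}" using source_facts N by (simp add: G_def out_orient_edge)
  have "cube_vertex (Suc N) t" using subcube_vertex[OF v C sink_facts(1)] .
  then have "(flip t {N}, t) \<in> ?D"
    using out_orient_edge_back[OF consistent_lift_out] sink_facts(2) N by blast
  moreover have "flip t {N} = flip s ?C'" using t by (auto simp: flip_def)
  ultimately have "G ?C'" using t by (simp add: G_def)
  then have "G {i} \<or> G (?C' - {i})" if "i \<in> ?C'" for i
    using upset_switch[OF up s0 C' _ that] G_same[of "{i}"] G_same[of "?C' - {i}"] G_same[of ?C'] that
    by auto
  then obtain c where c: "distinct c" "set c = ?C'"
    and switch: "\<And>r. 0 < r \<Longrightarrow> r < length c \<Longrightarrow> \<exists>j. 0 < j \<and> j < length c \<and> G (rot_prefix c r j)"
    using switching_order[of ?C' G] fin by auto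
  have card_C: "card C = Suc (length c)"
    using card_Suc_Diff1[OF fin N] distinct_card[OF c(1)] c(2) by simp
  have dirs: "insert N (set c) \<subseteq> C" and N_notin: "N \<notin> set c" using c(2) N by auto
  have uni: "uniform_from ?D s (set c)" "uniform_from ?D (flip s {N}) (set c)"
    using uniform_at_source[of "set c"] c(2) by simp_all
  have "disjoint_paths ?D (subcube v C) s (flip (flip s {N}) (set c)) (Suc (length c))"
    using crossing_disjoint_paths[OF c(1) N_notin uni source_facts(1) dirs]
      \<open>G {}\<close> \<open>G ?C'\<close> switch c(2) by (simp add: G_def)
  then show ?thesis using t c(2) card_C by simp
qed

end

lemma holt_klee_lifted:
  assumes up: "upset N U"
  shows "holt_klee (Suc N) (lifted N U F)"
  unfolding holt_klee_def
proof (intro conjI USO_lifted allI impI)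
  fix v C s t
  assume v: "cube_vertex (Suc N) v" and C: "C \<subseteq> {..<Suc N}"
    and source: "is_source (lifted N U F) (subcube v C) s"
    and sink: "is_sink (lifted N U F) (subcube v C) t"
  have "disjoint_paths (lifted N U F) (subcube v C) s t (card C)"
  proof (cases "N \<in> C")
    case False
    then show ?thesis by (rule paths_without_top[OF v C source sink])
  next
    case N: True
    show ?thesis
    proof (cases "N \<in> t \<longleftrightarrow> N \<in> s")
      case True
      then show ?thesis by (rule paths_returning[OF v C source sink N])
    next
      case False
      then have "N \<in> t \<longleftrightarrow> N \<notin> s" by blast
      then show ?thesis by (rule paths_crossing[OF v C source sink up N])
    qed
  qed
  then show "\<exists>P. (\<forall>i<card C. dpath (lifted N U F) (subcube v C) s t (P i)) \<and>
      inj_on P {..<card C} \<and>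
      (\<forall>i<card C. \<forall>j<card C. i \<noteq> j \<longrightarrow> set (P i) \<inter> set (P j) \<subseteq> {s, t})"
    unfolding disjoint_paths_def .
qed

text \<open>Every reorientation of a lifted orientation is again lifted, hence Holt--Klee.\<close>

lemma strongly_holt_klee_lifted: "upset N U \<Longrightarrow> strongly_holt_klee (Suc N) (lifted N U {})"
  unfolding strongly_holt_klee_def reorient_lifted using holt_klee_lifted by blast

section \<open>Counting\<close>

text \<open>Different families give different orientations: \<open>U\<close> can be read off from the edges
  in direction \<open>N\<close> at the bottom facet.\<close>

lemma inj_lifted: "inj_on (\<lambda>U. lifted N U {}) (Pow (Pow {..<N}))"
proof (rule inj_onI)
  fix U U' assume U: "U \<in> Pow (Pow {..<N})" and U': "U' \<in> Pow (Pow {..<N})"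
    and eq: "lifted N U {} = lifted N U' {}"
  have read_off: "(x, flip x {N}) \<in> lifted N W {} \<longleftrightarrow> x \<in> W" if "x \<subseteq> {..<N}" for x W
  proof -
    have "cube_vertex (Suc N) x" "N \<notin> x" using that by (auto simp: cube_vertex_def)
    then show ?thesis by (simp add: out_orient_edge lift_out_top)
  qed
  show "U = U'"
  proof (rule set_eqI)
    fix x show "x \<in> U \<longleftrightarrow> x \<in> U'"
      using U U' read_off[of x U] read_off[of x U'] eq by blast
  qed
qed

text \<open>All sets above the \<open>k\<close>-th layer of the \<open>N\<close>-cube together with any family of
  \<open>k\<close>-sets form an up-set; this gives \<open>2^(N choose k)\<close> up-sets.\<close>

lemma upset_above_layer:
  assumes A: "A \<subseteq> {x. x \<subseteq> {..<N} \<and> card x = k}"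
  shows "upset N ({x. x \<subseteq> {..<N} \<and> k < card x} \<union> A)"
  unfolding upset_def
proof (intro allI impI)
  fix x y assume x: "x \<in> {x. x \<subseteq> {..<N} \<and> k < card x} \<union> A" and xy: "x \<subseteq> y" and y: "y \<subseteq> {..<N}"
  have fin: "finite y" using y finite_subset by blast
  have "k \<le> card x" using x A by auto
  moreover have "card x \<le> card y" using card_mono[OF fin xy] .
  moreover have "card x < card y" if "x \<noteq> y" using psubset_card_mono[OF fin] xy that by blast
  ultimately show "y \<in> {x. x \<subseteq> {..<N} \<and> k < card x} \<union> A"
    using x y by (cases "x = y") auto
qed

lemma many_upsets: "2 ^ (N choose k) \<le> card {U. U \<subseteq> Pow {..<N} \<and> upset N U}"
proof -
  define layer where "layer = {x. x \<subseteq> {..<N} \<and> card x = k}"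
  define above where "above = {x. x \<subseteq> {..<N} \<and> k < card x}"
  have "inj_on (\<lambda>A. above \<union> A) (Pow layer)"
    by (rule inj_onI) (auto simp: above_def layer_def)
  then have "card (Pow layer) = card ((\<lambda>A. above \<union> A) ` Pow layer)"
    by (rule card_image[symmetric])
  also have "\<dots> \<le> card {U. U \<subseteq> Pow {..<N} \<and> upset N U}"
    using upset_above_layer by (intro card_mono) (auto simp: above_def layer_def)
  finally have "card (Pow layer) \<le> card {U. U \<subseteq> Pow {..<N} \<and> upset N U}" .
  moreover have "card (Pow layer) = 2 ^ (N choose k)"
    using n_subsets[of "{..<N}" k] by (simp add: layer_def card_Pow)
  ultimately show ?thesis by simp
qed

theorem mainTheorem4:
  fixes n :: nat
  assumes "n \<ge> 2"
  shows "card {D. USO n D \<and> acyclic D \<and> locally_uniform n D \<and> strongly_holt_klee n D}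
           \<ge> 2 ^ ((n - 1) choose ((n - 1) div 2))"
proof -
  obtain N where n: "n = Suc N" using assms by (cases n) auto
  let ?good = "{D. USO n D \<and> acyclic D \<and> locally_uniform n D \<and> strongly_holt_klee n D}"
  let ?upsets = "{U. U \<subseteq> Pow {..<N} \<and> upset N U}"
  have good: "(\<lambda>U. lifted N U {}) ` ?upsets \<subseteq> ?good"
  proof
    fix D assume "D \<in> (\<lambda>U. lifted N U {}) ` ?upsets"
    then obtain U where up: "upset N U" and D: "D = lifted N U {}" by blast
    show "D \<in> ?good"
      using USO_lifted acyclic_lifted locally_uniform_lifted[OF up] strongly_holt_klee_lifted[OF up]
      unfolding D n by blast
  qed
  have "finite ?good"
    using finite_orientations[of n] by (rule finite_subset[rotated]) (auto simp: USO_def)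
  have "inj_on (\<lambda>U. lifted N U {}) ?upsets"
    using inj_lifted by (rule inj_on_subset) auto
  then have "card ?upsets = card ((\<lambda>U. lifted N U {}) ` ?upsets)" by (rule card_image[symmetric])
  also have "\<dots> \<le> card ?good" by (rule card_mono[OF \<open>finite ?good\<close> good])
  finally have "card ?upsets \<le> card ?good" .
  then show ?thesis using many_upsets[of N "N div 2"] n by simp
qed

end
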